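(* Let $\Theta$ be an open saturated branch of a tableau in $\mathbf{TAB}_{\mathbf{IB}}$ with root formula $@_{i_0}\varphi_0$, let $\mathcal{M}^\Theta=(W^\Theta,R^\Theta,V^\Theta)$ be its model, $W^\Theta_r=\{w\in W^\Theta\mid wR^\Theta w\}$, and $\mathcal{M}^\Theta_B$ the bulldozed model of $\mathcal{M}^\Theta$. Let $i$ be an identity urfather on $\Theta$ and $\varphi$ a formula such that $@_i\varphi$ is a quasi-subformula of $@_{i_0}\varphi_0$. Then $\mathcal{M}^\Theta,i\models\varphi$ if and only if $\mathcal{M}^\Theta_B,i_B\models\varphi$, where $i_B=(i,0)$ if $i\in W^\Theta_r$ and $i_B=i$ otherwise.
   Context: Hybrid language: fix disjoint countably infinite sets $\mathbf{Prop}$ (propositional variables) and $\mathbf{Nom}$ (nominals). Formulas: $\varphi ::= p \mid i \mid \neg\varphi \mid \varphi\land\varphi \mid \Diamond\varphi \mid @_i\varphi$ with $p\in\mathbf{Prop}$, $i\in\mathbf{Nom}$; $\Box\varphi$ abbreviates $\neg\Diamond\neg\varphi$. A model $\mathcal{M}=(W,R,V)$ has $W$ nonempty, $R\subseteq W\times W$, and $V:\mathbf{Prop}\cup\mathbf{Nom}\to\mathcal{P}(W)$ with $V(i)=\{i^V\}$ a singleton for each nominal $i$. Satisfaction: $\mathcal{M},w\models p$ iff $w\in V(p)$; $\mathcal{M},w\models i$ iff $w=i^V$; Boolean clauses as usual; $\mathcal{M},w\models\Diamond\varphi$ iff there is $v$ with $wRv$ and $\mathcal{M},v\models\varphi$;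 $\mathcal{M},w\models @_i\varphi$ iff $\mathcal{M},i^V\models\varphi$. Tableau calculus $\mathbf{TAB}_{\mathbf{IB}}$. A tableau is a well-founded tree whose nodes are formulas of the form $@_i\varphi$; its root is a formula $@_i\varphi$ (the root formula) where $i$ does not occur in $\varphi$. A branch is a maximal path; $\varphi\in\Theta$ means $\varphi$ occurs on branch $\Theta$. Each branch is extended by applying the rules below to its formulas as often as possible, except that no further formula is added to a branch once either (i) every new formula generated by applying any rule already occurs on the branch, or (ii) the branch is closed, i.e. contains $@_i\varphi$ and $@_i\neg\varphi$ for some formula $\varphi$ and nominal $i$. Open means not closed. A branch is saturated if every new formula generated by applying some rule already occurs on it. An accessibility formula is a formula $@_i\Diamond j$ added by rule $[\Diamond]$ (with $j$ the new nominal). Rules (premises already on the branch; conclusions added to it): [$\neg\neg$] from $@_i\neg\neg\varphi$ add $@_i\varphi$; [$\land$] from $@_i(\varphi\land\psi)$ add $@_i\varphi$ and $@_i\psi$; [$\neg\land$] from $@_i\neg(\varphi\land\psi)$ split the branch into one extended by $@_i\neg\varphi$ and one extended by $@_i\neg\psi$; [$\Diamond$] from $@_i\Diamond\varphi$, which is not an accessibility formula, add $@_i\Diamond j$ and $@_j\varphi$ where $j$ is a nominal not occurring on the branch; this rule is applied at most once per formula, and only if $i$ is a quasi-urfather on the branch (defined below); [$\neg\Diamond$] from $@_i\neg\Diamond\varphi$ and $@_i\Diamond j$ add $@_j\neg\varphi$; [$\Box_{sym}$] from $@_i\Box\varphi$ and $@_j\Diamond i$ add $@_j\varphi$; [$@$]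 from $@_i@_j\varphi$ add $@_j\varphi$; [$\neg@$] from $@_i\neg@_j\varphi$ add $@_j\neg\varphi$; [$Id$] from $@_i\varphi$, which is not an accessibility formula, and $@_i j$ add $@_j\varphi$; [$Ref$] for any nominal $i$ occurring on the branch add $@_i i$; ($\mathcal{I}$) for any nominal $i$ occurring on the branch add $@_i\neg\Diamond i$. Auxiliary notions for a branch $\Theta$. $@_i\varphi$ is a quasi-subformula of $@_j\psi$ if $\varphi$ is a subformula of $\psi$, or $\varphi=\neg\chi$ with $\chi$ a subformula of $\psi$. For a nominal $i$ occurring in $\Theta$, $T^\Theta(i)=\{\varphi \mid @_i\varphi\in\Theta$ and $@_i\varphi$ is a quasi-subformula of the root formula$\}$. Nominals $i,j$ are twins if $T^\Theta(i)=T^\Theta(j)$. $i\prec_\Theta j$ if $j$ was introduced by applying $[\Diamond]$ to a formula $@_i\Diamond\varphi$; $\prec_\Theta^*$ is its reflexive transitive closure. A nominal $i$ is a quasi-urfather on $\Theta$ if there are no twins $j\neq k$ with $j\prec_\Theta^* i$ and $k\prec_\Theta^* i$. The identity urfather $v_\Theta(i)$ of a nominal $i$ occurring in $\Theta$ is the earliest introduced nominal $j$ on $\Theta$ such that $j$ is a twin of $i$ and $j$ is a quasi-urfather; it may fail to exist, and $\mathrm{dom}(v_\Theta)$ denotes the set of nominals for which it exists. A nominal is called an identity urfather on $\Theta$ if it is the identity urfather of some nominal (equivalently $v_\Theta(i)=i$). The model $\mathcal{M}^\Theta=(W^\Theta,R^\Theta,V^\Theta)$ of an open saturated branch $\Theta$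 with root formula $@_{i_0}\varphi_0$: $W^\Theta$ is the set of identity urfathers on $\Theta$; $R^\Theta=\{(v_\Theta(i),v_\Theta(j)) \mid @_i\Diamond j\in\Theta,\ i,j\in\mathrm{dom}(v_\Theta)\}\cup\{(v_\Theta(j),v_\Theta(i)) \mid @_i\Diamond j\in\Theta,\ i,j\in\mathrm{dom}(v_\Theta)\}$; $V^\Theta(p)=\{v_\Theta(i)\mid @_i p\in\Theta\}$ for $p\in\mathbf{Prop}$; for a nominal $i$, $V^\Theta(i)=\{v_\Theta(i)\}$ if $i\in\mathrm{dom}(v_\Theta)$ and $V^\Theta(i)=\{i_0\}$ otherwise. Bulldozed model: given a model $\mathcal{M}=(W,R,V)$, let $W_r=\{w\in W\mid wRw\}$, $W^-=W\setminus W_r$, and $W_B=W^-\cup\{(w,n)\mid w\in W_r,\ n\in\{0,1\}\}$. Let $\alpha:W_B\to W$ be $\alpha(w)=w$ for $w\in W^-$ and $\alpha((w,n))=w$. Define $wR_Bv$ iff one of: ($w\in W^-$ or $v\in W^-$) and $\alpha(w)R\alpha(v)$; or $w=(w',m)$, $v=(v',n)$, $w'\neq v'$ and $w'Rv'$; or $w\neq v$ and $\alpha(w)=\alpha(v)$. Define $V_B(p)=\{w\in W_B\mid\alpha(w)\in V(p)\}$ for $p\in\mathbf{Prop}$; for a nominal $i$, $V_B(i)=\{(i^V,0)\}$ if $i^V\in W_r$, and $V_B(i)=V(i)$ otherwise. The bulldozed model is $\mathcal{M}_B=(W_B,R_B,V_B)$; $\mathcal{M}^\Theta_B$ denotes the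 bulldozed model of $\mathcal{M}^\Theta$. *)

theory Defs
  imports Main
begin

datatype fm = Pro nat | Nom nat | Neg fm | Con fm fm | Dia fm | At nat fm

definition Box :: "fm \<Rightarrow> fm" where
  "Box \<phi> = Neg (Dia (Neg \<phi>))"

fun noms :: "fm \<Rightarrow> nat list" where
  "noms (Pro p) = []"
| "noms (Nom i) = [i]"
| "noms (Neg \<phi>) = noms \<phi>"
| "noms (Con \<phi> \<psi>) = noms \<phi> @ noms \<psi>"
| "noms (Dia \<phi>) = noms \<phi>"
| "noms (At i \<phi>) = i # noms \<phi>"

fun subs :: "fm \<Rightarrow> fm set" where
  "subs (Pro p) = {Pro p}"
| "subs (Nom i) = {Nom i}"
| "subs (Neg \<phi>) = insert (Neg \<phi>) (subs \<phi>)"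
| "subs (Con \<phi> \<psi>) = insert (Con \<phi> \<psi>) (subs \<phi> \<union> subs \<psi>)"
| "subs (Dia \<phi>) = insert (Dia \<phi>) (subs \<phi>)"
| "subs (At i \<phi>) = insert (At i \<phi>) (subs \<phi>)"

text \<open>@_i phi is a quasi-subformula of @_j psi (this does not depend on i, j).\<close>
definition quasi_sub :: "nat \<Rightarrow> fm \<Rightarrow> nat \<Rightarrow> fm \<Rightarrow> bool" where
  "quasi_sub i \<phi> j \<psi> \<longleftrightarrow> \<phi> \<in> subs \<psi> \<or> (\<exists>\<chi>. \<phi> = Neg \<chi> \<and> \<chi> \<in> subs \<psi>)"

text \<open>VP gives the valuation of propositional variables, VN i is the unique world i^V
with V(i) = {i^V}.\<close>
record 'w model =
  W :: "'w set"
  Rel :: "('w \<times> 'w) set"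
  VP :: "nat \<Rightarrow> 'w set"
  VN :: "nat \<Rightarrow> 'w"

fun sat :: "'w model \<Rightarrow> 'w \<Rightarrow> fm \<Rightarrow> bool" where
  "sat M w (Pro p) \<longleftrightarrow> w \<in> VP M p"
| "sat M w (Nom i) \<longleftrightarrow> w = VN M i"
| "sat M w (Neg \<phi>) \<longleftrightarrow> \<not> sat M w \<phi>"
| "sat M w (Con \<phi> \<psi>) \<longleftrightarrow> sat M w \<phi> \<and> sat M w \<psi>"
| "sat M w (Dia \<phi>) \<longleftrightarrow> (\<exists>v. (w, v) \<in> Rel M \<and> sat M v \<phi>)"
| "sat M w (At i \<phi>) \<longleftrightarrow> sat M (VN M i) \<phi>"

definition refl_worlds :: "'w model \<Rightarrow> 'w set" where
  "refl_worlds M = {w \<in> W M. (w, w) \<in> Rel M}"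

text \<open>Worlds of the bulldozed model: Inl w for w in W^-, Inr (w, n) for w in W_r, n in {0,1}.\<close>
fun alpha :: "'w + ('w \<times> nat) \<Rightarrow> 'w" where
  "alpha (Inl w) = w"
| "alpha (Inr (w, n)) = w"

definition bull_worlds :: "'w model \<Rightarrow> ('w + ('w \<times> nat)) set" where
  "bull_worlds M = Inl ` (W M - refl_worlds M)
     \<union> {Inr (w, n) | w n. w \<in> refl_worlds M \<and> n \<in> {0, 1}}"

definition bulldoze :: "'w model \<Rightarrow> ('w + ('w \<times> nat)) model" where
  "bulldoze M = \<lparr> W = bull_worlds M,
     Rel = {(x, y). x \<in> bull_worlds M \<and> y \<in> bull_worlds M \<and>
              (((isl x \<or> isl y) \<and> (alpha x, alpha y) \<in> Rel M)
               \<or> (\<exists>w' m v' n. x = Inr (w', m) \<and> y = Inr (v', n) \<and> w' \<noteq> v' \<and> (w', v') \<in> Rel M)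
               \<or> (x \<noteq> y \<and> alpha x = alpha y))},
     VP = (\<lambda>p. {x \<in> bull_worlds M. alpha x \<in> VP M p}),
     VN = (\<lambda>i. if VN M i \<in> refl_worlds M then Inr (VN M i, 0) else Inl (VN M i)) \<rparr>"

text \<open>A branch with root formula @_{i0} phi0 is represented by i0, phi0 and the list of
rule applications performed on it, in order. Add phi adds a single formula by one of the
rules other than [Dia] (a two-conclusion rule [and] is performed as two Add steps; for the
splitting rule [not-and] the branch receives one of the two conclusions).
DiaApp i phi j is the application of [Dia] to @_i Dia phi with new nominal j; it adds the
accessibility formula @_i Dia j and the formula @_j phi.\<close>

datatype step = Add fm | DiaApp nat fm nat

text \<open>Nodes of a branch; the boolean flag marks accessibility formulas.\<close>
fun step_nodes :: "step \<Rightarrow> (fm \<times> bool) list" where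
  "step_nodes (Add \<phi>) = [(\<phi>, False)]"
| "step_nodes (DiaApp i \<phi> j) = [(At i (Dia (Nom j)), True), (At j \<phi>, False)]"

definition nodes :: "nat \<Rightarrow> fm \<Rightarrow> step list \<Rightarrow> (fm \<times> bool) list" where
  "nodes i0 \<phi>0 ss = (At i0 \<phi>0, False) # concat (map step_nodes ss)"

definition fmls :: "nat \<Rightarrow> fm \<Rightarrow> step list \<Rightarrow> fm set" where
  "fmls i0 \<phi>0 ss = fst ` set (nodes i0 \<phi>0 ss)"

definition plain_fmls :: "nat \<Rightarrow> fm \<Rightarrow> step list \<Rightarrow> fm set" where
  "plain_fmls i0 \<phi>0 ss = {\<phi>. (\<phi>, False) \<in> set (nodes i0 \<phi>0 ss)}"

text \<open>Sequence of nominal occurrences on the branch, in the order in which they appear;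
earlier first occurrence = earlier introduced.\<close>
definition nom_seq :: "nat \<Rightarrow> fm \<Rightarrow> step list \<Rightarrow> nat list" where
  "nom_seq i0 \<phi>0 ss = concat (map (noms \<circ> fst) (nodes i0 \<phi>0 ss))"

definition occurs :: "nat \<Rightarrow> fm \<Rightarrow> step list \<Rightarrow> nat \<Rightarrow> bool" where
  "occurs i0 \<phi>0 ss i \<longleftrightarrow> i \<in> set (nom_seq i0 \<phi>0 ss)"

definition intro_idx :: "nat \<Rightarrow> fm \<Rightarrow> step list \<Rightarrow> nat \<Rightarrow> nat" where
  "intro_idx i0 \<phi>0 ss j =
     (LEAST n. n < length (nom_seq i0 \<phi>0 ss) \<and> nom_seq i0 \<phi>0 ss ! n = j)"

definition prec :: "step list \<Rightarrow> (nat \<times> nat) set" where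
  "prec ss = {(i, j). \<exists>\<phi>. DiaApp i \<phi> j \<in> set ss}"

definition applied :: "step list \<Rightarrow> nat \<Rightarrow> fm \<Rightarrow> bool" where
  "applied ss i \<phi> \<longleftrightarrow> (\<exists>j. DiaApp i \<phi> j \<in> set ss)"

definition Tset :: "nat \<Rightarrow> fm \<Rightarrow> step list \<Rightarrow> nat \<Rightarrow> fm set" where
  "Tset i0 \<phi>0 ss i = {\<phi>. At i \<phi> \<in> fmls i0 \<phi>0 ss \<and> quasi_sub i \<phi> i0 \<phi>0}"

definition twins :: "nat \<Rightarrow> fm \<Rightarrow> step list \<Rightarrow> nat \<Rightarrow> nat \<Rightarrow> bool" where
  "twins i0 \<phi>0 ss i j \<longleftrightarrow> Tset i0 \<phi>0 ss i = Tset i0 \<phi>0 ss j"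

definition quasi_urfather :: "nat \<Rightarrow> fm \<Rightarrow> step list \<Rightarrow> nat \<Rightarrow> bool" where
  "quasi_urfather i0 \<phi>0 ss i \<longleftrightarrow>
     \<not> (\<exists>j k. j \<noteq> k \<and> occurs i0 \<phi>0 ss j \<and> occurs i0 \<phi>0 ss k \<and> twins i0 \<phi>0 ss j k
              \<and> (j, i) \<in> (prec ss)\<^sup>* \<and> (k, i) \<in> (prec ss)\<^sup>*)"

text \<open>is_id_urf ... i j: j is the identity urfather of i.\<close>
definition is_id_urf :: "nat \<Rightarrow> fm \<Rightarrow> step list \<Rightarrow> nat \<Rightarrow> nat \<Rightarrow> bool" where
  "is_id_urf i0 \<phi>0 ss i j \<longleftrightarrow>
     occurs i0 \<phi>0 ss i \<and> occurs i0 \<phi>0 ss j \<and> twins i0 \<phi>0 ss i j \<and> quasi_urfather i0 \<phi>0 ss j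
     \<and> (\<forall>k. occurs i0 \<phi>0 ss k \<and> twins i0 \<phi>0 ss i k \<and> quasi_urfather i0 \<phi>0 ss k
            \<longrightarrow> intro_idx i0 \<phi>0 ss j \<le> intro_idx i0 \<phi>0 ss k)"

definition urf_dom :: "nat \<Rightarrow> fm \<Rightarrow> step list \<Rightarrow> nat set" where
  "urf_dom i0 \<phi>0 ss = {i. \<exists>j. is_id_urf i0 \<phi>0 ss i j}"

definition urf :: "nat \<Rightarrow> fm \<Rightarrow> step list \<Rightarrow> nat \<Rightarrow> nat" where
  "urf i0 \<phi>0 ss i = (THE j. is_id_urf i0 \<phi>0 ss i j)"

definition id_urfathers :: "nat \<Rightarrow> fm \<Rightarrow> step list \<Rightarrow> nat set" where
  "id_urfathers i0 \<phi>0 ss = {j. \<exists>i. is_id_urf i0 \<phi>0 ss i j}"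

text \<open>Conclusions of the non-splitting rules other than [Dia], given the formulas F on the
branch and the non-accessibility formulas P on the branch.\<close>
definition concl :: "fm set \<Rightarrow> fm set \<Rightarrow> fm set" where
  "concl F P =
      {At i \<phi> | i \<phi>. At i (Neg (Neg \<phi>)) \<in> F}
    \<union> {At i \<phi> | i \<phi> \<psi>. At i (Con \<phi> \<psi>) \<in> F}
    \<union> {At i \<psi> | i \<phi> \<psi>. At i (Con \<phi> \<psi>) \<in> F}
    \<union> {At j (Neg \<phi>) | i j \<phi>. At i (Neg (Dia \<phi>)) \<in> F \<and> At i (Dia (Nom j)) \<in> F}
    \<union> {At j \<phi> | i j \<phi>. At i (Box \<phi>) \<in> F \<and> At j (Dia (Nom i)) \<in> F}
    \<union> {At j \<phi> | i j \<phi>. At i (At j \<phi>) \<in> F}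
    \<union> {At j (Neg \<phi>) | i j \<phi>. At i (Neg (At j \<phi>)) \<in> F}
    \<union> {At j \<phi> | i j \<phi>. At i \<phi> \<in> P \<and> At i (Nom j) \<in> F}
    \<union> {At i (Nom i) | i. i \<in> (\<Union>\<phi>\<in>F. set (noms \<phi>))}
    \<union> {At i (Neg (Dia (Nom i))) | i. i \<in> (\<Union>\<phi>\<in>F. set (noms \<phi>))}"

definition step_ok :: "nat \<Rightarrow> fm \<Rightarrow> step list \<Rightarrow> step \<Rightarrow> bool" where
  "step_ok i0 \<phi>0 pre s = (case s of
      Add \<phi> \<Rightarrow> \<phi> \<in> concl (fmls i0 \<phi>0 pre) (plain_fmls i0 \<phi>0 pre)
              \<or> (\<exists>i a b. At i (Neg (Con a b)) \<in> fmls i0 \<phi>0 pre \<and> (\<phi> = At i (Neg a) \<or> \<phi> = At i (Neg b)))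
    | DiaApp i \<phi> j \<Rightarrow> At i (Dia \<phi>) \<in> plain_fmls i0 \<phi>0 pre \<and> \<not> occurs i0 \<phi>0 pre j
              \<and> \<not> applied pre i \<phi> \<and> quasi_urfather i0 \<phi>0 pre i)"

definition closed :: "nat \<Rightarrow> fm \<Rightarrow> step list \<Rightarrow> bool" where
  "closed i0 \<phi>0 ss \<longleftrightarrow> (\<exists>i \<phi>. At i \<phi> \<in> fmls i0 \<phi>0 ss \<and> At i (Neg \<phi>) \<in> fmls i0 \<phi>0 ss)"

definition saturated :: "nat \<Rightarrow> fm \<Rightarrow> step list \<Rightarrow> bool" where
  "saturated i0 \<phi>0 ss \<longleftrightarrow>
     concl (fmls i0 \<phi>0 ss) (plain_fmls i0 \<phi>0 ss) \<subseteq> fmls i0 \<phi>0 ss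
   \<and> (\<forall>i a b. At i (Neg (Con a b)) \<in> fmls i0 \<phi>0 ss
        \<longrightarrow> At i (Neg a) \<in> fmls i0 \<phi>0 ss \<or> At i (Neg b) \<in> fmls i0 \<phi>0 ss)
   \<and> (\<forall>i \<phi>. At i (Dia \<phi>) \<in> plain_fmls i0 \<phi>0 ss \<and> quasi_urfather i0 \<phi>0 ss i
        \<longrightarrow> applied ss i \<phi>)"

definition is_branch :: "nat \<Rightarrow> fm \<Rightarrow> step list \<Rightarrow> bool" where
  "is_branch i0 \<phi>0 ss \<longleftrightarrow> i0 \<notin> set (noms \<phi>0) \<and>
     (\<forall>n < length ss. step_ok i0 \<phi>0 (take n ss) (ss ! n)
        \<and> \<not> closed i0 \<phi>0 (take n ss) \<and> \<not> saturated i0 \<phi>0 (take n ss))"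

definition branch_model :: "nat \<Rightarrow> fm \<Rightarrow> step list \<Rightarrow> nat model" where
  "branch_model i0 \<phi>0 ss = \<lparr>
     W = id_urfathers i0 \<phi>0 ss,
     Rel = {(urf i0 \<phi>0 ss i, urf i0 \<phi>0 ss j) | i j.
              At i (Dia (Nom j)) \<in> fmls i0 \<phi>0 ss \<and> i \<in> urf_dom i0 \<phi>0 ss \<and> j \<in> urf_dom i0 \<phi>0 ss}
         \<union> {(urf i0 \<phi>0 ss j, urf i0 \<phi>0 ss i) | i j.
              At i (Dia (Nom j)) \<in> fmls i0 \<phi>0 ss \<and> i \<in> urf_dom i0 \<phi>0 ss \<and> j \<in> urf_dom i0 \<phi>0 ss},
     VP = (\<lambda>p. {urf i0 \<phi>0 ss i | i. At i (Pro p) \<in> fmls i0 \<phi>0 ss \<and> i \<in> urf_dom i0 \<phi>0 ss}),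
     VN = (\<lambda>i. if i \<in> urf_dom i0 \<phi>0 ss then urf i0 \<phi>0 ss i else i0) \<rparr>"

end

(* The projection alpha from the bulldozed model onto M is a bounded morphism that preserves
   the propositional valuation: the loop at a reflexive world w is replaced by the edge between
   its two copies (w,0) and (w,1).  It also preserves a nominal naming an irreflexive world,
   which has a single copy; hence formulas whose nominal atoms name irreflexive worlds have the
   same truth value at x and at alpha x.
   In the model of an open saturated branch the nominals of the root formula do name
   irreflexive worlds: a loop at urf j comes from some @_a <>b on the branch with a, b twins of
   j, so a and b inherit @_j j, and the rules (Ref), (Id), (I) and [not <>] then derive @_b not j
   next to @_b j. *)

theory Submission
  imports Defs
begin

definition bull_copy :: "'w model \<Rightarrow> 'w \<Rightarrow> 'w + ('w \<times> nat)" where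
  "bull_copy M w = (if w \<in> refl_worlds M then Inr (w, 0) else Inl w)"

lemma alpha_bull_copy [simp]: "alpha (bull_copy M w) = w"
  by (simp add: bull_copy_def)

lemma bull_copy_in_bull_worlds: "w \<in> W M \<Longrightarrow> bull_copy M w \<in> bull_worlds M"
  by (auto simp: bull_copy_def bull_worlds_def refl_worlds_def)

lemma VN_bulldoze: "VN (bulldoze M) j = bull_copy M (VN M j)"
  by (simp add: bulldoze_def bull_copy_def)

lemma bull_worlds_irrefl:
  "x \<in> bull_worlds M \<Longrightarrow> alpha x \<notin> refl_worlds M \<Longrightarrow> x = Inl (alpha x)"
  by (auto simp: bull_worlds_def)

lemma Rel_bulldoze_bull_worlds:
  "(x, y) \<in> Rel (bulldoze M) \<Longrightarrow> x \<in> bull_worlds M \<and> y \<in> bull_worlds M"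
  by (simp add: bulldoze_def)

lemma Rel_bulldoze_alpha:
  assumes "(x, y) \<in> Rel (bulldoze M)"
  shows "(alpha x, alpha y) \<in> Rel M"
proof -
  have "x \<in> bull_worlds M" "y \<in> bull_worlds M"
    using Rel_bulldoze_bull_worlds[OF assms] by auto
  moreover have "(alpha x, alpha y) \<in> Rel M \<or> (x \<noteq> y \<and> alpha x = alpha y)"
    using assms by (auto simp: bulldoze_def)
  ultimately show ?thesis
    by (auto simp: bull_worlds_def refl_worlds_def)
qed

lemma Rel_bulldoze_back:
  assumes x: "x \<in> bull_worlds M" and R: "(alpha x, v) \<in> Rel M" and v: "v \<in> W M"
  shows "\<exists>y. (x, y) \<in> Rel (bulldoze M) \<and> alpha y = v"
proof (cases "v = alpha x")
  case True
  then have "alpha x \<in> refl_worlds M"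
    using R v by (simp add: refl_worlds_def)
  then obtain n where "x = Inr (v, n)" "n = 0 \<or> n = 1"
    using x True by (auto simp: bull_worlds_def)
  then show ?thesis
    using x by (intro exI[of _ "Inr (v, 1 - n)"]) (auto simp: bulldoze_def bull_worlds_def)
next
  case False
  have "bull_copy M v \<in> bull_worlds M"
    using v by (rule bull_copy_in_bull_worlds)
  then have "(x, bull_copy M v) \<in> Rel (bulldoze M)"
    using x R False by (cases x) (auto simp: bulldoze_def bull_copy_def)
  then show ?thesis
    by auto
qed

theorem sat_bulldoze:
  assumes "Rel M \<subseteq> W M \<times> W M"
    and "\<And>j. j \<in> set (noms \<psi>) \<Longrightarrow> VN M j \<in> W M"
    and "\<And>j. Nom j \<in> subs \<psi> \<Longrightarrow> VN M j \<notin> refl_worlds M"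
    and "x \<in> bull_worlds M"
  shows "sat (bulldoze M) x \<psi> \<longleftrightarrow> sat M (alpha x) \<psi>"
  using assms(2-4)
proof (induction \<psi> arbitrary: x)
  case (Pro p)
  then show ?case
    by (simp add: bulldoze_def)
next
  case (Nom j)
  then show ?case
    using bull_worlds_irrefl[of x M] by (auto simp: VN_bulldoze bull_copy_def)
next
  case (Dia \<psi>)
  have IH: "sat (bulldoze M) y \<psi> \<longleftrightarrow> sat M (alpha y) \<psi>" if "y \<in> bull_worlds M" for y
    using Dia.IH Dia.prems(1,2) that by simp
  show ?case
  proof
    assume "sat (bulldoze M) x (Dia \<psi>)"
    then obtain y where y: "(x, y) \<in> Rel (bulldoze M)" "sat (bulldoze M) y \<psi>"
      by auto
    then have "sat M (alpha y) \<psi>"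
      using IH Rel_bulldoze_bull_worlds by blast
    then show "sat M (alpha x) (Dia \<psi>)"
      using Rel_bulldoze_alpha[OF y(1)] by auto
  next
    assume "sat M (alpha x) (Dia \<psi>)"
    then obtain v where v: "(alpha x, v) \<in> Rel M" "sat M v \<psi>"
      by auto
    then have "v \<in> W M"
      using assms(1) by blast
    then obtain y where y: "(x, y) \<in> Rel (bulldoze M)" "alpha y = v"
      using Rel_bulldoze_back[OF Dia.prems(3) v(1)] by blast
    then have "sat (bulldoze M) y \<psi>"
      using IH Rel_bulldoze_bull_worlds v(2) by blast
    then show "sat (bulldoze M) x (Dia \<psi>)"
      using y(1) by auto
  qed
next
  case (At j \<psi>)
  then have "bull_copy M (VN M j) \<in> bull_worlds M"
    by (simp add: bull_copy_in_bull_worlds)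
  then show ?case
    using At by (simp add: VN_bulldoze)
qed auto

lemma subs_trans: "\<psi> \<in> subs \<phi> \<Longrightarrow> subs \<psi> \<subseteq> subs \<phi>"
  by (induction \<phi>) auto

lemma noms_subs: "\<psi> \<in> subs \<phi> \<Longrightarrow> set (noms \<psi>) \<subseteq> set (noms \<phi>)"
  by (induction \<phi>) auto

lemma quasi_sub_noms: "quasi_sub i \<phi> i0 \<phi>0 \<Longrightarrow> set (noms \<phi>) \<subseteq> set (noms \<phi>0)"
  unfolding quasi_sub_def using noms_subs by fastforce

lemma quasi_sub_Nom: "quasi_sub i \<phi> i0 \<phi>0 \<Longrightarrow> Nom j \<in> subs \<phi> \<Longrightarrow> Nom j \<in> subs \<phi>0"
  unfolding quasi_sub_def using subs_trans by fastforce

lemma Nom_subs_noms: "Nom j \<in> subs \<phi> \<Longrightarrow> j \<in> set (noms \<phi>)"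
  using noms_subs by fastforce

lemma concl_Ref: "\<phi> \<in> F \<Longrightarrow> i \<in> set (noms \<phi>) \<Longrightarrow> At i (Nom i) \<in> concl F P"
  unfolding concl_def by fast

lemma concl_Irr: "\<phi> \<in> F \<Longrightarrow> i \<in> set (noms \<phi>) \<Longrightarrow> At i (Neg (Dia (Nom i))) \<in> concl F P"
  unfolding concl_def by fast

lemma concl_Id: "At i \<phi> \<in> P \<Longrightarrow> At i (Nom j) \<in> F \<Longrightarrow> At j \<phi> \<in> concl F P"
  unfolding concl_def by fast

lemma concl_NegDia:
  "At i (Neg (Dia \<phi>)) \<in> F \<Longrightarrow> At i (Dia (Nom j)) \<in> F \<Longrightarrow> At j (Neg \<phi>) \<in> concl F P"
  unfolding concl_def by fast

lemma root_in_fmls: "At i0 \<phi>0 \<in> fmls i0 \<phi>0 ss"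
  unfolding fmls_def nodes_def by force

lemma occurs_root: "j \<in> set (noms \<phi>0) \<Longrightarrow> occurs i0 \<phi>0 ss j"
  unfolding occurs_def nom_seq_def nodes_def by simp

lemma accessibility_node:
  assumes "(\<phi>, True) \<in> set (nodes i0 \<phi>0 ss)"
  shows "\<exists>a b. \<phi> = At a (Dia (Nom b))"
proof -
  obtain s where "s \<in> set ss" "(\<phi>, True) \<in> set (step_nodes s)"
    using assms unfolding nodes_def by auto
  then show ?thesis
    by (cases s rule: step.exhaust) auto
qed

lemma plain_fmlsI:
  assumes "\<phi> \<in> fmls i0 \<phi>0 ss" and "\<And>a b. \<phi> \<noteq> At a (Dia (Nom b))"
  shows "\<phi> \<in> plain_fmls i0 \<phi>0 ss"
proof -
  obtain c where "(\<phi>, c) \<in> set (nodes i0 \<phi>0 ss)"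
    using assms(1) unfolding fmls_def by force
  moreover have "c = False"
    using accessibility_node[of \<phi> i0 \<phi>0 ss] assms(2) calculation by (cases c) auto
  ultimately show ?thesis
    unfolding plain_fmls_def by simp
qed

lemma prec_root:
  assumes "is_branch i0 \<phi>0 ss" and "j \<in> set (noms \<phi>0)"
  shows "(k, j) \<notin> prec ss"
proof
  assume "(k, j) \<in> prec ss"
  then obtain \<psi> n where n: "n < length ss" "ss ! n = DiaApp k \<psi> j"
    unfolding prec_def by (auto simp: in_set_conv_nth)
  then have "step_ok i0 \<phi>0 (take n ss) (ss ! n)"
    using assms(1) unfolding is_branch_def by blast
  then have "\<not> occurs i0 \<phi>0 (take n ss) j"
    using n(2) unfolding step_ok_def by simp
  then show False
    using occurs_root[OF assms(2)] by blast
qed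

lemma quasi_urfather_root:
  assumes "is_branch i0 \<phi>0 ss" and "j \<in> set (noms \<phi>0)"
  shows "quasi_urfather i0 \<phi>0 ss j"
proof -
  have "k = j" if "(k, j) \<in> (prec ss)\<^sup>*" for k
    using that prec_root[OF assms] by (cases rule: rtranclE) auto
  then show ?thesis
    unfolding quasi_urfather_def by blast
qed

lemma nom_seq_intro_idx: "occurs i0 \<phi>0 ss j \<Longrightarrow> nom_seq i0 \<phi>0 ss ! intro_idx i0 \<phi>0 ss j = j"
  unfolding occurs_def intro_idx_def
  by (rule LeastI2_ex) (auto simp: in_set_conv_nth)

lemma is_id_urf_unique: "is_id_urf i0 \<phi>0 ss i j \<Longrightarrow> is_id_urf i0 \<phi>0 ss i k \<Longrightarrow> j = k"
  unfolding is_id_urf_def by (metis le_antisym nom_seq_intro_idx)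

lemma is_id_urf_urf:
  assumes "i \<in> urf_dom i0 \<phi>0 ss"
  shows "is_id_urf i0 \<phi>0 ss i (urf i0 \<phi>0 ss i)"
proof -
  have "\<exists>!j. is_id_urf i0 \<phi>0 ss i j"
    using assms is_id_urf_unique unfolding urf_dom_def by blast
  then show ?thesis
    unfolding urf_def by (rule theI')
qed

lemma urf_in_id_urfathers: "i \<in> urf_dom i0 \<phi>0 ss \<Longrightarrow> urf i0 \<phi>0 ss i \<in> id_urfathers i0 \<phi>0 ss"
  using is_id_urf_urf unfolding id_urfathers_def by blast

lemma Tset_urf: "i \<in> urf_dom i0 \<phi>0 ss \<Longrightarrow> Tset i0 \<phi>0 ss (urf i0 \<phi>0 ss i) = Tset i0 \<phi>0 ss i"
  using is_id_urf_urf unfolding is_id_urf_def twins_def by metis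

lemma root_in_urf_dom:
  assumes "is_branch i0 \<phi>0 ss" and "j \<in> set (noms \<phi>0)"
  shows "j \<in> urf_dom i0 \<phi>0 ss"
proof -
  let ?P = "\<lambda>k. occurs i0 \<phi>0 ss k \<and> twins i0 \<phi>0 ss j k \<and> quasi_urfather i0 \<phi>0 ss k"
  have "?P j"
    using occurs_root[OF assms(2)] quasi_urfather_root[OF assms] unfolding twins_def by simp
  then obtain k where "?P k" "\<forall>k'. ?P k' \<longrightarrow> intro_idx i0 \<phi>0 ss k \<le> intro_idx i0 \<phi>0 ss k'"
    using ex_has_least_nat[of ?P j "intro_idx i0 \<phi>0 ss"] by blast
  then have "is_id_urf i0 \<phi>0 ss j k"
    using \<open>?P j\<close> unfolding is_id_urf_def by blast
  then show ?thesis
    unfolding urf_dom_def by blast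
qed

lemma VN_branch_model: "j \<in> urf_dom i0 \<phi>0 ss \<Longrightarrow> VN (branch_model i0 \<phi>0 ss) j = urf i0 \<phi>0 ss j"
  by (simp add: branch_model_def)

lemma W_branch_model: "W (branch_model i0 \<phi>0 ss) = id_urfathers i0 \<phi>0 ss"
  by (simp add: branch_model_def)

lemma Rel_branch_model_subset:
  "Rel (branch_model i0 \<phi>0 ss) \<subseteq> W (branch_model i0 \<phi>0 ss) \<times> W (branch_model i0 \<phi>0 ss)"
  using urf_in_id_urfathers unfolding branch_model_def by auto

lemma VN_root_in_W:
  "is_branch i0 \<phi>0 ss \<Longrightarrow> j \<in> set (noms \<phi>0) \<Longrightarrow> VN (branch_model i0 \<phi>0 ss) j \<in> W (branch_model i0 \<phi>0 ss)"
  by (simp add: root_in_urf_dom VN_branch_model W_branch_model urf_in_id_urfathers)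

lemma VN_root_Nom_irreflexive:
  assumes br: "is_branch i0 \<phi>0 ss" and open_branch: "\<not> closed i0 \<phi>0 ss"
    and saturated_branch: "saturated i0 \<phi>0 ss" and jN: "Nom j \<in> subs \<phi>0"
  shows "VN (branch_model i0 \<phi>0 ss) j \<notin> refl_worlds (branch_model i0 \<phi>0 ss)"
proof
  let ?M = "branch_model i0 \<phi>0 ss" and ?F = "fmls i0 \<phi>0 ss" and ?P = "plain_fmls i0 \<phi>0 ss"
  let ?T = "Tset i0 \<phi>0 ss" and ?urf = "urf i0 \<phi>0 ss"
  have j: "j \<in> set (noms \<phi>0)" and jd: "j \<in> urf_dom i0 \<phi>0 ss"
    using Nom_subs_noms[OF jN] root_in_urf_dom[OF br] by auto
  have closure: "concl ?F ?P \<subseteq> ?F"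
    using saturated_branch unfolding saturated_def by blast
  assume "VN ?M j \<in> refl_worlds ?M"
  then have "(?urf j, ?urf j) \<in> Rel ?M"
    using VN_branch_model[OF jd] unfolding refl_worlds_def by simp
  then obtain a b where ab: "At a (Dia (Nom b)) \<in> ?F" "a \<in> urf_dom i0 \<phi>0 ss" "b \<in> urf_dom i0 \<phi>0 ss"
      "?urf a = ?urf j" "?urf b = ?urf j"
    unfolding branch_model_def by auto
  then have twins: "?T a = ?T j" "?T b = ?T j"
    using Tset_urf jd by metis+
  have "At j (Nom j) \<in> ?F"
    using closure concl_Ref[OF root_in_fmls, of j i0 \<phi>0 ss] j by auto
  moreover have "quasi_sub j (Nom j) i0 \<phi>0"
    using jN unfolding quasi_sub_def by blast
  ultimately have "Nom j \<in> ?T j"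
    unfolding Tset_def by blast
  then have aj: "At a (Nom j) \<in> ?F" and bj: "At b (Nom j) \<in> ?F"
    using twins unfolding Tset_def by auto
  have "At a (Nom a) \<in> ?P"
    using closure concl_Ref[OF ab(1), of a] by (auto intro: plain_fmlsI)
  then have ja: "At j (Nom a) \<in> ?F"
    using closure concl_Id[OF _ aj] by blast
  have "At j (Neg (Dia (Nom j))) \<in> ?P"
    using closure concl_Irr[OF root_in_fmls, of j i0 \<phi>0 ss] j by (auto intro: plain_fmlsI)
  then have "At a (Neg (Dia (Nom j))) \<in> ?F"
    using closure concl_Id[OF _ ja] by blast
  then have "At b (Neg (Nom j)) \<in> ?F"
    using closure concl_NegDia[OF _ ab(1)] by blast
  then show False
    using open_branch bj unfolding closed_def by blast
qed

theorem lemma13: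
  fixes i0 :: nat and \<phi>0 :: fm and ss :: "step list" and i :: nat and \<phi> :: fm
  assumes "is_branch i0 \<phi>0 ss"
    and "\<not> closed i0 \<phi>0 ss"
    and "saturated i0 \<phi>0 ss"
    and "i \<in> id_urfathers i0 \<phi>0 ss"
    and "quasi_sub i \<phi> i0 \<phi>0"
  shows "sat (branch_model i0 \<phi>0 ss) i \<phi> \<longleftrightarrow>
         sat (bulldoze (branch_model i0 \<phi>0 ss))
             (if i \<in> refl_worlds (branch_model i0 \<phi>0 ss) then Inr (i, 0) else Inl i) \<phi>"
proof -
  let ?M = "branch_model i0 \<phi>0 ss"
  have "(if i \<in> refl_worlds ?M then Inr (i, 0) else Inl i) = bull_copy ?M i"
    by (simp add: bull_copy_def)
  moreover have "bull_copy ?M i \<in> bull_worlds ?M"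
    using assms(4) by (simp add: W_branch_model bull_copy_in_bull_worlds)
  moreover have "VN ?M j \<in> W ?M" if "j \<in> set (noms \<phi>)" for j
    using VN_root_in_W[OF assms(1)] quasi_sub_noms[OF assms(5)] that by blast
  moreover have "VN ?M j \<notin> refl_worlds ?M" if "Nom j \<in> subs \<phi>" for j
    using VN_root_Nom_irreflexive[OF assms(1-3) quasi_sub_Nom[OF assms(5) that]] .
  ultimately show ?thesis
    using sat_bulldoze[OF Rel_branch_model_subset, where \<psi> = \<phi> and x = "bull_copy ?M i"] by simp
qed

end
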